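(* For every integer $\ell\geq 3$, the cycle $C_{2\ell+1}$ is not probe $P_5$-free, but it is probe $P_6$-free.
   Context: All graphs are finite and simple. $C_n$ is the cycle on $n$ vertices and $P_t$ the path on $t$ vertices. A graph is $H$-free if it contains no induced subgraph isomorphic to $H$. A graph $G=(V,E)$ is probe $H$-free if there is an independent set $N$ of $G$ and a set $F\subseteq\binom{N}{2}$ such that the graph $(V,E\cup F)$ is $H$-free. *)

theory Defs
  imports Main
begin

type_synonym 'a graph = "'a set \<times> 'a set set"

definition simple_graph :: "'a graph \<Rightarrow> bool" where
  "simple_graph G \<longleftrightarrow> finite (fst G) \<and>
     (\<forall>e\<in>snd G. \<exists>u v. u \<noteq> v \<and> e = {u, v} \<and> u \<in> fst G \<and> v \<in> fst G)"

definition induced_subgraph_of :: "'b graph \<Rightarrow> 'a graph \<Rightarrow> bool" where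
  "induced_subgraph_of H G \<longleftrightarrow>
     (\<exists>f. inj_on f (fst H) \<and> f ` fst H \<subseteq> fst G \<and>
          (\<forall>u\<in>fst H. \<forall>v\<in>fst H. ({u, v} \<in> snd H \<longleftrightarrow> {f u, f v} \<in> snd G)))"

definition H_free :: "'b graph \<Rightarrow> 'a graph \<Rightarrow> bool" where
  "H_free H G \<longleftrightarrow> \<not> induced_subgraph_of H G"

definition independent_set :: "'a graph \<Rightarrow> 'a set \<Rightarrow> bool" where
  "independent_set G N \<longleftrightarrow> N \<subseteq> fst G \<and> (\<forall>u\<in>N. \<forall>v\<in>N. {u, v} \<notin> snd G)"

definition probe_H_free :: "'b graph \<Rightarrow> 'a graph \<Rightarrow> bool" where
  "probe_H_free H G \<longleftrightarrow>
     (\<exists>N F. independent_set G N \<and>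
            F \<subseteq> {e. \<exists>u v. u \<in> N \<and> v \<in> N \<and> u \<noteq> v \<and> e = {u, v}} \<and>
            H_free H (fst G, snd G \<union> F))"

definition cycle_graph :: "nat \<Rightarrow> nat graph" where
  "cycle_graph n = ({0..<n}, {{i, (i + 1) mod n} | i. i < n})"

definition path_graph :: "nat \<Rightarrow> nat graph" where
  "path_graph t = ({0..<t}, {{i, i + 1} | i. i + 1 < t})"

end

theory Submission
  imports Defs "HOL-Number_Theory.Cong"
begin

text \<open>
  Not probe P5-free: an independent set N of an odd cycle cannot alternate all the way around,
  so some two consecutive vertices a, a + 1 lie outside N. The added edges join vertices of N
  only, so on the six consecutive vertices a, ..., a + 5 the only possible new chord is
  {a + 2, a + 4}; without it a, ..., a + 4 is an induced P5, with it a, a + 1, a + 2, a + 4, a + 5 is.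

  Probe P6-free: take N to be every second vertex 0, 2, ..., n - 3 and make it a clique. An
  induced path meets a clique in at most two consecutive vertices, which cover at most three of
  its edges, while every edge of the resulting graph except {n - 2, n - 1} meets N. So an induced
  path has at most 3 + 1 edges.
\<close>

lemma path_graph_edge_iff:
  "{u, v} \<in> snd (path_graph t) \<longleftrightarrow> (v = Suc u \<and> Suc u < t) \<or> (u = Suc v \<and> Suc v < t)"
  by (auto simp: path_graph_def doubleton_eq_iff)

lemma induced_subgraph_of_path_graph_iff:
  "induced_subgraph_of (path_graph t) G \<longleftrightarrow>
     (\<exists>s. inj_on s {0..<t} \<and> s ` {0..<t} \<subseteq> fst G \<and>
          (\<forall>i<t. \<forall>j<t. {s i, s j} \<in> snd G \<longleftrightarrow> j = Suc i \<or> i = Suc j))"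
proof -
  have "\<And>i j. i < t \<Longrightarrow> j < t \<Longrightarrow>
      (j = Suc i \<and> Suc i < t \<or> i = Suc j \<and> Suc j < t) \<longleftrightarrow> j = Suc i \<or> i = Suc j"
    by auto
  then show ?thesis
    unfolding induced_subgraph_of_def path_graph_edge_iff
    by (simp add: path_graph_def Ball_def eq_commute[of "_ \<in> snd G"] cong: imp_cong)
qed

lemma cycle_graph_edge_iff:
  "{x, y} \<in> snd (cycle_graph n) \<longleftrightarrow> x < n \<and> y < n \<and> (y = Suc x mod n \<or> x = Suc y mod n)"
  by (auto simp: cycle_graph_def doubleton_eq_iff)

lemma mod_add_left_cancel_less:
  fixes a i j n :: nat
  assumes "(a + i) mod n = (a + j) mod n" "i < n" "j < n"
  shows "i = j"
  using assms cong_add_lcancel_nat cong_less_modulus_unique_nat unfolding cong_def by blast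

lemma cycle_graph_edge_shift_iff:
  assumes "Suc i < n" "Suc j < n"
  shows "{(a + i) mod n, (a + j) mod n} \<in> snd (cycle_graph n) \<longleftrightarrow> j = Suc i \<or> i = Suc j"
proof -
  have "(a + j) mod n = Suc ((a + i) mod n) mod n \<longleftrightarrow> j = Suc i"
    using assms mod_add_left_cancel_less[of a j n "Suc i"] by (auto simp: mod_Suc_eq)
  moreover have "(a + i) mod n = Suc ((a + j) mod n) mod n \<longleftrightarrow> i = Suc j"
    using assms mod_add_left_cancel_less[of a i n "Suc j"] by (auto simp: mod_Suc_eq)
  ultimately show ?thesis
    using assms by (simp add: cycle_graph_edge_iff)
qed

lemma induced_path_in_cycle_window:
  fixes q :: "nat \<Rightarrow> nat"
  assumes "inj_on q {0..<t}" "\<forall>i<t. q i < n"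
    and "\<And>i j. i < t \<Longrightarrow> j < t \<Longrightarrow>
      {(a + q i) mod n, (a + q j) mod n} \<in> E \<longleftrightarrow> j = Suc i \<or> i = Suc j"
  shows "induced_subgraph_of (path_graph t) (fst (cycle_graph n), E)"
proof -
  let ?p = "\<lambda>i. (a + q i) mod n"
  have "inj_on ?p {0..<t}"
  proof (rule inj_onI)
    fix x y assume xy: "x \<in> {0..<t}" "y \<in> {0..<t}" "?p x = ?p y"
    then have "q x = q y"
      using assms(2) mod_add_left_cancel_less[of a "q x" n "q y"] by simp
    with assms(1) show "x = y"
      using xy(1,2) by (rule inj_onD)
  qed
  moreover have "?p ` {0..<t} \<subseteq> fst (cycle_graph n)"
    using assms(2) by (fastforce simp: cycle_graph_def)
  ultimately show ?thesis
    using assms(3) unfolding induced_subgraph_of_path_graph_iff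
    by (intro exI[of _ ?p]) auto
qed

lemma odd_cycle_independent_set_gap:
  assumes "odd n" and N: "independent_set (cycle_graph n) N"
  obtains a where "a < n" "a \<notin> N" "Suc a mod n \<notin> N"
proof -
  have "n > 0" using \<open>odd n\<close> by (rule odd_pos)
  have "\<exists>a<n. a \<notin> N \<and> Suc a mod n \<notin> N"
  proof (rule ccontr)
    assume "\<not> ?thesis"
    then have covered: "a \<in> N \<or> Suc a mod n \<in> N" if "a < n" for a
      using that by blast
    have "{a, Suc a mod n} \<in> snd (cycle_graph n)" if "a < n" for a
      using that \<open>n > 0\<close> by (simp add: cycle_graph_edge_iff)
    with N have "a \<in> N \<Longrightarrow> Suc a mod n \<notin> N" if "a < n" for a
      using that unfolding independent_set_def by blast
    with covered have alternate: "Suc a mod n \<in> N \<longleftrightarrow> a \<notin> N" if "a < n" for a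
      using that by blast
    have parity: "k \<in> N \<longleftrightarrow> (even k \<longleftrightarrow> 0 \<in> N)" if "k < n" for k
      using that
    proof (induction k)
      case (Suc k)
      then show ?case using alternate[of k] by auto
    qed simp
    have "even (n - 1)" "n - 1 < n" "Suc (n - 1) mod n = 0"
      using \<open>odd n\<close> \<open>n > 0\<close> by auto
    then show False using parity[of "n - 1"] alternate[of "n - 1"] by simp
  qed
  with that show thesis by blast
qed

lemma odd_cycle_probe_extension_induced_path5:
  assumes "odd n" "7 \<le> n" and N: "independent_set (cycle_graph n) N"
    and F: "F \<subseteq> {e. \<exists>u v. u \<in> N \<and> v \<in> N \<and> u \<noteq> v \<and> e = {u, v}}"
  shows "induced_subgraph_of (path_graph 5) (fst (cycle_graph n), snd (cycle_graph n) \<union> F)"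
    (is "induced_subgraph_of _ ?G")
proof -
  obtain a where "a < n" "a \<notin> N" "Suc a mod n \<notin> N"
    using odd_cycle_independent_set_gap[OF \<open>odd n\<close> N] by blast
  define s where "s i = (a + i) mod n" for i
  have s01_notin_N: "s 0 \<notin> N" "s 1 \<notin> N"
    using \<open>a < n\<close> \<open>a \<notin> N\<close> \<open>Suc a mod n \<notin> N\<close> by (simp_all add: s_def)
  have s_edge: "{s i, s j} \<in> snd (cycle_graph n) \<longleftrightarrow> j = Suc i \<or> i = Suc j"
    if "i \<le> 5" "j \<le> 5" for i j
    using that \<open>7 \<le> n\<close> unfolding s_def by (intro cycle_graph_edge_shift_iff) auto
  have F_in_N: "s i \<in> N" "s j \<in> N" "i \<noteq> j" if "{s i, s j} \<in> F" for i j
    using that F by (auto simp: doubleton_eq_iff)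
  have window_F: "{i, j} = {2, 4}" if "{s i, s j} \<in> F" "i \<le> 4" "j \<le> 4" for i j
  proof -
    have "i \<in> {2, 3, 4}" "j \<in> {2, 3, 4}"
      using F_in_N(1,2)[OF that(1)] that(2,3) s01_notin_N by (auto simp: le_Suc_eq numeral_eq_Suc)
    moreover have "\<not> (j = Suc i \<or> i = Suc j)"
      using N F_in_N(1,2)[OF that(1)] s_edge[of i j] that(2,3)
      unfolding independent_set_def by auto
    ultimately show ?thesis
      using F_in_N(3)[OF that(1)] by auto
  qed
  have induced_P5: "induced_subgraph_of (path_graph 5) ?G"
    if "inj_on q {0..<5}" "\<forall>i<5. q i \<le> 5"
      "\<And>i j. i < 5 \<Longrightarrow> j < 5 \<Longrightarrow>
        {s (q i), s (q j)} \<in> snd (cycle_graph n) \<union> F \<longleftrightarrow> j = Suc i \<or> i = Suc j" for q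
  proof -
    have "\<forall>i<5. q i < n" using that(2) \<open>7 \<le> n\<close> by fastforce
    with that(1) show ?thesis
      using that(3) unfolding s_def by (rule induced_path_in_cycle_window)
  qed
  show ?thesis
  proof (cases "{s 2, s 4} \<in> F")
    case False
    have "{s i, s j} \<notin> F" if "i < 5" "j < 5" for i j
      using window_F[of i j] that False by (auto simp: doubleton_eq_iff insert_commute)
    then show ?thesis
      by (intro induced_P5[of id]) (auto simp: s_edge)
  next
    case True
    have "s 5 \<notin> N"
      using N F_in_N(2)[OF True] s_edge[of 4 5] unfolding independent_set_def by auto
    then have F_iff: "{s i, s j} \<in> F \<longleftrightarrow> {i, j} = {2, 4}" if "i \<le> 5" "j \<le> 5" for i j
      using that window_F[of i j] F_in_N(1,2)[of i j] True
      by (cases "i = 5 \<or> j = 5") (auto simp: doubleton_eq_iff insert_commute)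
    let ?q = "\<lambda>i. if i \<le> 2 then i else Suc i"
    have "{s (?q i), s (?q j)} \<in> snd (cycle_graph n) \<union> F \<longleftrightarrow> j = Suc i \<or> i = Suc j"
      if "i < 5" "j < 5" for i j
      using that F_iff by (auto simp: s_edge doubleton_eq_iff)
    moreover have "inj_on ?q {0..<5}" by (auto simp: inj_on_def)
    ultimately show ?thesis
      by (intro induced_P5[of ?q]) auto
  qed
qed

lemma induced_path_meets_clique_consecutively:
  assumes inj: "inj_on s {0..<t}"
    and adj: "\<forall>i<t. \<forall>j<t. {s i, s j} \<in> snd G \<longleftrightarrow> j = Suc i \<or> i = Suc j"
    and clique: "\<And>u v. u \<in> K \<Longrightarrow> v \<in> K \<Longrightarrow> u \<noteq> v \<Longrightarrow> {u, v} \<in> snd G"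
  obtains k where "\<And>i. i < t \<Longrightarrow> s i \<in> K \<Longrightarrow> i = k \<or> i = Suc k"
proof (cases "\<exists>i<t. s i \<in> K")
  case True
  define k where "k = (LEAST i. i < t \<and> s i \<in> K)"
  have "k < t \<and> s k \<in> K"
    unfolding k_def using True by (rule LeastI_ex)
  moreover have "k \<le> i" if "i < t" "s i \<in> K" for i
    unfolding k_def using that by (intro Least_le) simp
  ultimately have k: "k < t" "s k \<in> K" "\<And>i. i < t \<Longrightarrow> s i \<in> K \<Longrightarrow> k \<le> i"
    by auto
  show thesis
  proof (rule that)
    fix i assume i: "i < t" "s i \<in> K"
    show "i = k \<or> i = Suc k"
    proof (rule ccontr)
      assume "\<not> (i = k \<or> i = Suc k)"
      moreover from this have "{s k, s i} \<in> snd G"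
        using i k inj by (intro clique) (auto dest: inj_onD)
      ultimately show False
        using adj[rule_format, of k i] i k(1) k(3)[OF i] by auto
    qed
  qed
qed blast

lemma path6_free_if_clique_covers_all_edges_but_one:
  assumes cover: "\<And>u v. {u, v} \<in> snd G \<Longrightarrow> u \<in> K \<or> v \<in> K \<or> {u, v} = D"
    and clique: "\<And>u v. u \<in> K \<Longrightarrow> v \<in> K \<Longrightarrow> u \<noteq> v \<Longrightarrow> {u, v} \<in> snd G"
  shows "H_free (path_graph 6) G"
  unfolding H_free_def induced_subgraph_of_path_graph_iff
proof clarify
  fix s
  assume inj: "inj_on s {0..<6}"
    and adj: "\<forall>i<6. \<forall>j<6. {s i, s j} \<in> snd G \<longleftrightarrow> j = Suc i \<or> i = Suc j"
  obtain k where k: "\<And>i. i < 6 \<Longrightarrow> s i \<in> K \<Longrightarrow> i = k \<or> i = Suc k"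
    using induced_path_meets_clique_consecutively[OF inj adj clique] by blast
  have D_edge: "{s i, s (Suc i)} = D" if "i < 5" "i \<notin> {k, Suc k}" "Suc i \<notin> {k, Suc k}" for i
  proof -
    have "{s i, s (Suc i)} \<in> snd G" using adj that(1) by simp
    then have "s i \<in> K \<or> s (Suc i) \<in> K \<or> {s i, s (Suc i)} = D" by (rule cover)
    then show ?thesis using k[of i] k[of "Suc i"] that by auto
  qed
  obtain i j where ij: "i < j" "j < 5" "\<forall>m \<in> {i, Suc i, j, Suc j}. m \<notin> {k, Suc k}"
  proof -
    consider "k \<le> 1" | "k = 2" | "3 \<le> k" by linarith
    then show thesis
    proof cases
      case 1 then show thesis by (intro that[of 3 4]) auto
    next
      case 2 then show thesis by (intro that[of 0 4]) auto
    next
      case 3 then show thesis by (intro that[of 0 1]) auto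
    qed
  qed
  have "{s i, s (Suc i)} = D" "{s j, s (Suc j)} = D"
    using ij by (intro D_edge; simp)+
  then have "s i = s j \<or> s i = s (Suc j)"
    by (auto simp: doubleton_eq_iff)
  then show False
    using ij(1,2) inj by (auto dest: inj_onD)
qed

definition even_below :: "nat \<Rightarrow> nat set" where
  "even_below m = {k. even k \<and> k < m}"

lemma independent_set_cycle_even_below:
  assumes "m < n"
  shows "independent_set (cycle_graph n) (even_below m)"
  unfolding independent_set_def
proof (intro conjI ballI)
  show "even_below m \<subseteq> fst (cycle_graph n)"
    using assms by (auto simp: even_below_def cycle_graph_def)
  fix u v assume "u \<in> even_below m" "v \<in> even_below m"
  then have "Suc u mod n = Suc u" "Suc v mod n = Suc v" "even u" "even v"
    using assms by (auto simp: even_below_def)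
  then show "{u, v} \<notin> snd (cycle_graph n)"
    by (auto simp: cycle_graph_edge_iff)
qed

lemma odd_cycle_edge_meets_even_below:
  assumes "odd n" "3 \<le> n" "{u, v} \<in> snd (cycle_graph n)"
  shows "u \<in> even_below (n - 2) \<or> v \<in> even_below (n - 2) \<or> {u, v} = {n - 2, n - 1}"
proof -
  have "u \<in> even_below (n - 2) \<or> Suc u mod n \<in> even_below (n - 2) \<or>
      {u, Suc u mod n} = {n - 2, n - 1}" if "u < n" for u
  proof -
    consider "u < n - 2" | "u = n - 2" | "u = n - 1" using \<open>u < n\<close> by linarith
    then show ?thesis
    proof cases
      case 1
      then have "even u \<or> (even (Suc u) \<and> Suc u < n - 2)"
        using \<open>odd n\<close> by presburger
      then show ?thesis using 1 by (auto simp: even_below_def)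
    next
      case 2
      then have "Suc u mod n = n - 1" using assms by simp
      then show ?thesis using 2 by simp
    next
      case 3
      then have "Suc u mod n = 0" using assms by simp
      then show ?thesis using assms by (simp add: even_below_def)
    qed
  qed
  then show ?thesis
    using assms(3) unfolding cycle_graph_edge_iff by (auto simp: insert_commute)
qed

lemma odd_cycle_probe_path6_free:
  assumes "odd n" "3 \<le> n"
  shows "probe_H_free (path_graph 6) (cycle_graph n)"
proof -
  define N where "N = even_below (n - 2)"
  define F where "F = {e. \<exists>u v. u \<in> N \<and> v \<in> N \<and> u \<noteq> v \<and> e = {u, v}}"
  have "H_free (path_graph 6) (fst (cycle_graph n), snd (cycle_graph n) \<union> F)"
  proof (rule path6_free_if_clique_covers_all_edges_but_one)
    fix u v
    assume "{u, v} \<in> snd (fst (cycle_graph n), snd (cycle_graph n) \<union> F)"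
    then show "u \<in> N \<or> v \<in> N \<or> {u, v} = {n - 2, n - 1}"
      using odd_cycle_edge_meets_even_below[OF assms, of u v]
      by (auto simp: N_def F_def doubleton_eq_iff)
  qed (auto simp: F_def)
  moreover have "independent_set (cycle_graph n) N"
    unfolding N_def using assms by (intro independent_set_cycle_even_below) simp
  ultimately show ?thesis
    unfolding probe_H_free_def by (intro exI[of _ N] exI[of _ F]) (simp add: F_def)
qed

theorem mainTheorem9:
  fixes l :: nat
  assumes "l \<ge> 3"
  shows "\<not> probe_H_free (path_graph 5) (cycle_graph (2 * l + 1)) \<and>
         probe_H_free (path_graph 6) (cycle_graph (2 * l + 1))"
proof
  have n: "odd (2 * l + 1)" "7 \<le> 2 * l + 1"
    using assms by auto
  show "\<not> probe_H_free (path_graph 5) (cycle_graph (2 * l + 1))"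
    unfolding probe_H_free_def H_free_def
    using odd_cycle_probe_extension_induced_path5[OF n] by blast
  show "probe_H_free (path_graph 6) (cycle_graph (2 * l + 1))"
    using n by (intro odd_cycle_probe_path6_free) auto
qed

end
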